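(* The GreedyEJR-M rule is well-defined, always terminates, and for every instance returns a bundle $R'$ with $s(R')\le\alpha$ that satisfies EJR-M (and therefore EJR-1). In particular, an EJR-M allocation exists in every instance.
   Context: Model: There is a set of agents $N=\{1,\dots,n\}$. The resource $R$ consists of a cake $C=[0,c]$ for a real $c\ge 0$ and a set of indivisible goods $G=\{g_1,\dots,g_m\}$ for an integer $m\ge 0$, with $\max(c,m)>0$. A piece of cake is a union of finitely many disjoint closed subintervals of $C$; its length $\ell(\cdot)$ is the sum of the lengths of its intervals. A bundle $R'=(C',G')$ consists of a piece of cake $C'\subseteq C$ and a set $G'\subseteq G$; its size is $s(R')=\ell(C')+|G'|$. Each agent $i$ approves a bundle $R_i=(C_i,G_i)$, and her utility for a bundle $R'$ is $u_i(R')=\ell(C_i\cap C')+|G_i\cap G'|$. A parameter $\alpha\in(0,c+m]$ is given; an allocation is a bundle $A$ with $s(A)\le\alpha$. For a real $t\ge 0$, a group $N^*\subseteq N$ is $t$-cohesive if $|N^*|\ge t\cdot n/\alpha$ and $s(\bigcap_{i\in N^*}R_i)\ge t$. EJR-M: an allocation $A$ satisfies EJR-M if for every real $t>0$ and every $t$-cohesive group $N^*$ for which there exists a bundle $R^*\subseteq R$ with $s(R^* )=t$ and $R^*\subseteq R_i$ for all $i\in N^*$, there is $j\in N^*$ with $u_j(A)\ge t$. EJR-1: for every real $t>0$ and every $t$-cohesive $N^*$, some $j\in N^*$ has $u_j(A)>t-1$. GreedyEJR-M rule: Step 1: set $N'=N$, $R'=\emptyset$. Step 2: let $t^*$ be the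 largest nonnegative real for which there exist a nonempty $N^*\subseteq N'$ and a bundle $R^*\subseteq R$ such that $N^*$ is $t^*$-cohesive, $R^*\subseteq R_i$ for all $i\in N^*$, and $s(R^* )=t^*$; take any such pair $(N^*,R^* )$, remove $N^*$ from $N'$, and add to $R'$ the part of $R^*$ not already in $R'$. Step 3: if $N'=\emptyset$ return $R'$; otherwise go to Step 2. *)

theory Defs
  imports "HOL-Analysis.Analysis"
begin

definition is_piece :: "real \<Rightarrow> real set \<Rightarrow> bool" where
  "is_piece c P \<longleftrightarrow> P \<subseteq> {0..c} \<and>
     (\<exists>I :: (real \<times> real) set. finite I \<and> (\<forall>(a,b)\<in>I. a \<le> b) \<and>
        pairwise (\<lambda>(a,b) (a',b'). {a..b} \<inter> {a'..b'} = {}) I \<and>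
        P = (\<Union>(a,b)\<in>I. {a..b}))"

definition piece_len :: "real set \<Rightarrow> real" where
  "piece_len P = measure lborel P"

type_synonym 'g bndl = "real set \<times> 'g set"

definition is_bundle :: "real \<Rightarrow> 'g set \<Rightarrow> 'g bndl \<Rightarrow> bool" where
  "is_bundle c G B \<longleftrightarrow> is_piece c (fst B) \<and> snd B \<subseteq> G"

definition bsize :: "'g bndl \<Rightarrow> real" where
  "bsize B = piece_len (fst B) + real (card (snd B))"

definition util :: "'g bndl \<Rightarrow> 'g bndl \<Rightarrow> real" where
  "util Ri B = piece_len (fst Ri \<inter> fst B) + real (card (snd Ri \<inter> snd B))"

definition bsub :: "'g bndl \<Rightarrow> 'g bndl \<Rightarrow> bool" where
  "bsub B B' \<longleftrightarrow> fst B \<subseteq> fst B' \<and> snd B \<subseteq> snd B'"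

text \<open>Intersection of the approved bundles of a group (within the resource).\<close>
definition common :: "real \<Rightarrow> 'g set \<Rightarrow> ('a \<Rightarrow> 'g bndl) \<Rightarrow> 'a set \<Rightarrow> 'g bndl" where
  "common c G R S = ({0..c} \<inter> (\<Inter>i\<in>S. fst (R i)), G \<inter> (\<Inter>i\<in>S. snd (R i)))"

definition cohesive ::
  "real \<Rightarrow> 'g set \<Rightarrow> real \<Rightarrow> 'a set \<Rightarrow> ('a \<Rightarrow> 'g bndl) \<Rightarrow> real \<Rightarrow> 'a set \<Rightarrow> bool" where
  "cohesive c G \<alpha> N R t S \<longleftrightarrow> S \<subseteq> N \<and> real (card S) \<ge> t * real (card N) / \<alpha>
      \<and> bsize (common c G R S) \<ge> t"

definition EJR_M ::
  "real \<Rightarrow> 'g set \<Rightarrow> real \<Rightarrow> 'a set \<Rightarrow> ('a \<Rightarrow> 'g bndl) \<Rightarrow> 'g bndl \<Rightarrow> bool" where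
  "EJR_M c G \<alpha> N R A \<longleftrightarrow>
     (\<forall>t S. t > 0 \<and> cohesive c G \<alpha> N R t S \<and>
        (\<exists>B. is_bundle c G B \<and> bsize B = t \<and> (\<forall>i\<in>S. bsub B (R i)))
        \<longrightarrow> (\<exists>j\<in>S. util (R j) A \<ge> t))"

definition EJR_1 ::
  "real \<Rightarrow> 'g set \<Rightarrow> real \<Rightarrow> 'a set \<Rightarrow> ('a \<Rightarrow> 'g bndl) \<Rightarrow> 'g bndl \<Rightarrow> bool" where
  "EJR_1 c G \<alpha> N R A \<longleftrightarrow>
     (\<forall>t S. t > 0 \<and> cohesive c G \<alpha> N R t S \<longrightarrow> (\<exists>j\<in>S. util (R j) A > t - 1))"

text \<open>GreedyEJR-M. A state is (remaining agents N', current bundle R').\<close>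

definition greedy_feasible ::
  "real \<Rightarrow> 'g set \<Rightarrow> real \<Rightarrow> 'a set \<Rightarrow> ('a \<Rightarrow> 'g bndl) \<Rightarrow> 'a set \<Rightarrow> real \<Rightarrow> 'a set \<Rightarrow> 'g bndl \<Rightarrow> bool" where
  "greedy_feasible c G \<alpha> N R N' t S B \<longleftrightarrow> S \<noteq> {} \<and> S \<subseteq> N' \<and> cohesive c G \<alpha> N R t S
     \<and> is_bundle c G B \<and> (\<forall>i\<in>S. bsub B (R i)) \<and> bsize B = t"

definition greedy_tstar ::
  "real \<Rightarrow> 'g set \<Rightarrow> real \<Rightarrow> 'a set \<Rightarrow> ('a \<Rightarrow> 'g bndl) \<Rightarrow> 'a set \<Rightarrow> real \<Rightarrow> bool" where
  "greedy_tstar c G \<alpha> N R N' t \<longleftrightarrow> t \<ge> 0 \<and> (\<exists>S B. greedy_feasible c G \<alpha> N R N' t S B) \<and>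
     (\<forall>t'. t' \<ge> 0 \<and> (\<exists>S B. greedy_feasible c G \<alpha> N R N' t' S B) \<longrightarrow> t' \<le> t)"

definition greedy_step ::
  "real \<Rightarrow> 'g set \<Rightarrow> real \<Rightarrow> 'a set \<Rightarrow> ('a \<Rightarrow> 'g bndl) \<Rightarrow>
   'a set \<times> 'g bndl \<Rightarrow> 'a set \<times> 'g bndl \<Rightarrow> bool" where
  "greedy_step c G \<alpha> N R st st' \<longleftrightarrow> fst st \<noteq> {} \<and>
     (\<exists>t S B. greedy_tstar c G \<alpha> N R (fst st) t \<and> greedy_feasible c G \<alpha> N R (fst st) t S B \<and>
        st' = (fst st - S, (fst (snd st) \<union> fst B, snd (snd st) \<union> snd B)))"

end

theory Submission
  imports Defs
begin

text \<open>Two invariants of GreedyEJR-M give the theorem. A group S removed with value t* has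
  |S| \<ge> t*\<cdot>n/\<alpha> and adds at most t* to the bundle, so the bundle never costs more than \<alpha>/n
  per removed agent, and at most \<alpha> at the end. And every t-cohesive group with a common
  bundle of size t that contains a removed agent already has a member with utility at least t:
  when its first member was removed, the whole group was still present and a candidate, so
  t \<le> t*, and that member approves the whole bundle of size t* chosen then. The maximum t*
  exists since the sizes of bundles inside the common part of a group form a finite union
  of closed intervals, a compact set. EJR-1 follows because every admissible t can be
  lowered by less than 1 to the size of an actual common bundle.\<close>

definition disjoint_interval_rep :: "(real \<times> real) set \<Rightarrow> real set \<Rightarrow> bool" where
  "disjoint_interval_rep I P \<longleftrightarrow> finite I \<and> (\<forall>(a,b)\<in>I. a \<le> b) \<and>
     pairwise (\<lambda>(a,b) (a',b'). {a..b} \<inter> {a'..b'} = {}) I \<and> P = (\<Union>(a,b)\<in>I. {a..b})"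

lemma Icc_Un_overlapping:
  fixes a b a' b' :: real
  assumes "{a..b} \<inter> {a'..b'} \<noteq> {}"
  shows "{a..b} \<union> {a'..b'} = {min a a'..max b b'}"
  using assms by (auto simp: min_def max_def)

text \<open>Merging two overlapping intervals into their hull reduces the number of intervals.\<close>
lemma finite_interval_union_disjoint_rep:
  assumes "finite I" "\<forall>(a,b)\<in>I. a \<le> b"
  shows "\<exists>J. disjoint_interval_rep J (\<Union>(a,b)\<in>I. {a..b})"
  using assms
proof (induction "card I" arbitrary: I rule: less_induct)
  case less
  show ?case
  proof (cases "pairwise (\<lambda>(a,b) (a',b'). {a..b} \<inter> {a'..b'} = {}) I")
    case True
    then show ?thesis using less.prems unfolding disjoint_interval_rep_def by blast
  next
    case False
    then obtain a b a' b' where p: "(a,b) \<in> I" "(a',b') \<in> I" "(a,b) \<noteq> (a',b')"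
      and meet: "{a..b} \<inter> {a'..b'} \<noteq> {}"
      unfolding pairwise_def by auto
    define I' where "I' = insert (min a a', max b b') (I - {(a,b), (a',b')})"
    have "card {(a,b), (a',b')} = 2" using p(3) by simp
    moreover have "{(a,b), (a',b')} \<subseteq> I" using p by blast
    ultimately have "card (I - {(a,b), (a',b')}) = card I - 2" "2 \<le> card I"
      using less.prems(1) card_mono by (metis card_Diff_subset finite_subset)+
    then have "card I' < card I"
      using less.prems(1) unfolding I'_def by (auto simp: card_insert_if)
    moreover have "finite I'" "\<forall>(a,b)\<in>I'. a \<le> b"
      using less.prems meet unfolding I'_def by (auto simp: min_def max_def)
    moreover have "(\<Union>(a,b)\<in>I'. {a..b}) = (\<Union>(a,b)\<in>I. {a..b})"
      using p Icc_Un_overlapping[OF meet] unfolding I'_def by blast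
    ultimately show ?thesis using less.hyps by metis
  qed
qed

text \<open>Overlapping and empty intervals are allowed here, which makes closure under
  \<open>\<inter>\<close> and \<open>\<union>\<close> immediate.\<close>
lemma is_pieceI:
  assumes "P \<subseteq> {0..c}" "finite I" "P = (\<Union>(a,b)\<in>I. {a..b})"
  shows "is_piece c P"
proof -
  let ?I = "{(a,b)\<in>I. a \<le> b}"
  have "finite ?I" using assms(2) by (rule finite_subset[rotated]) auto
  moreover have "P = (\<Union>(a,b)\<in>?I. {a..b})" using assms(3) by auto
  ultimately obtain J where "disjoint_interval_rep J P"
    using finite_interval_union_disjoint_rep[of ?I] by auto
  then show ?thesis using assms(1) unfolding disjoint_interval_rep_def is_piece_def by blast
qed

lemma is_pieceE:
  assumes "is_piece c P"
  obtains I where "P \<subseteq> {0..c}" "finite I" "P = (\<Union>(a,b)\<in>I. {a..b})"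
  using assms unfolding is_piece_def by blast

lemma piece_Int:
  assumes "is_piece c P" "is_piece c Q"
  shows "is_piece c (P \<inter> Q)"
proof -
  obtain I I' where I: "P \<subseteq> {0..c}" "finite I" "P = (\<Union>(a,b)\<in>I. {a..b})"
    and I': "finite I'" "Q = (\<Union>(a,b)\<in>I'. {a..b})"
    using assms by (metis is_pieceE)
  let ?J = "(\<lambda>((a,b),(a',b')). (max a a', min b b')) ` (I \<times> I')"
  have "P \<inter> Q = (\<Union>(a,b)\<in>?J. {a..b})"
    unfolding I(3) I'(2) by (force simp: Int_atLeastAtMost)
  moreover have "P \<inter> Q \<subseteq> {0..c}" using I(1) by blast
  ultimately show ?thesis using I(2) I'(1) by (intro is_pieceI[of _ _ ?J]) auto
qed

lemma piece_Un:
  assumes "is_piece c P" "is_piece c Q"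
  shows "is_piece c (P \<union> Q)"
proof -
  obtain I I' where I: "P \<subseteq> {0..c}" "finite I" "P = (\<Union>(a,b)\<in>I. {a..b})"
    and I': "Q \<subseteq> {0..c}" "finite I'" "Q = (\<Union>(a,b)\<in>I'. {a..b})"
    using assms by (metis is_pieceE)
  then show ?thesis by (intro is_pieceI[of _ _ "I \<union> I'"]) auto
qed

lemma piece_empty: "is_piece c {}"
  by (rule is_pieceI[of _ _ "{}"]) auto

lemma piece_Icc: "0 \<le> y \<Longrightarrow> y \<le> c \<Longrightarrow> is_piece c {0..y}"
  by (rule is_pieceI[of _ _ "{(0,y)}"]) auto

lemma compact_piece: "is_piece c P \<Longrightarrow> compact P"
  by (elim is_pieceE) (auto intro!: compact_UN)

lemma piece_fmeasurable: "is_piece c P \<Longrightarrow> P \<in> fmeasurable lborel"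
  by (simp add: compact_piece fmeasurable_compact)

lemma piece_len_nonneg: "piece_len P \<ge> 0"
  unfolding piece_len_def by simp

lemma piece_len_mono: "is_piece c P \<Longrightarrow> is_piece c Q \<Longrightarrow> P \<subseteq> Q \<Longrightarrow> piece_len P \<le> piece_len Q"
  unfolding piece_len_def by (meson fmeasurableD measure_mono_fmeasurable piece_fmeasurable)

lemma piece_len_Un_le:
  "is_piece c P \<Longrightarrow> is_piece c Q \<Longrightarrow> piece_len (P \<union> Q) \<le> piece_len P + piece_len Q"
  unfolding piece_len_def by (meson fmeasurableD measure_Un_le piece_fmeasurable)

lemma measure_Int_atLeastAtMost_lipschitz:
  fixes Q :: "real set"
  assumes "compact Q" "y \<le> y'"
  shows "measure lborel (Q \<inter> {0..y}) \<le> measure lborel (Q \<inter> {0..y'})"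
    and "measure lborel (Q \<inter> {0..y'}) \<le> measure lborel (Q \<inter> {0..y}) + (y' - y)"
proof -
  have fm: "Q \<inter> {0..y} \<in> fmeasurable lborel" "Q \<inter> {0..y'} \<in> fmeasurable lborel"
    "(Q \<inter> {0..y}) \<union> {y..y'} \<in> fmeasurable lborel"
    using assms(1) by (auto intro!: fmeasurable_compact compact_Un)
  then show "measure lborel (Q \<inter> {0..y}) \<le> measure lborel (Q \<inter> {0..y'})"
    using assms(2) by (intro measure_mono_fmeasurable) auto
  have "measure lborel (Q \<inter> {0..y'}) \<le> measure lborel ((Q \<inter> {0..y}) \<union> {y..y'})"
    using fm assms(2) by (intro measure_mono_fmeasurable) auto
  also have "\<dots> \<le> measure lborel (Q \<inter> {0..y}) + measure lborel {y..y'}"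
    using fm by (intro measure_Un_le) auto
  finally show "measure lborel (Q \<inter> {0..y'}) \<le> measure lborel (Q \<inter> {0..y}) + (y' - y)"
    using assms(2) by simp
qed

text \<open>The length of the part of a piece left of y grows continuously from 0 to its full
  length, so every intermediate length is attained by a prefix.\<close>
lemma exists_subpiece_of_length:
  assumes Q: "is_piece c Q" and "0 \<le> c" "0 \<le> x" "x \<le> piece_len Q"
  shows "\<exists>P. is_piece c P \<and> P \<subseteq> Q \<and> piece_len P = x"
proof -
  define f where "f y = measure lborel (Q \<inter> {0..y})" for y
  have "1-lipschitz_on {0..c} f"
  proof (rule lipschitz_onI)
    fix y y' :: real
    show "dist (f y) (f y') \<le> 1 * dist y y'"
      using measure_Int_atLeastAtMost_lipschitz[OF compact_piece[OF Q], of y y']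
        measure_Int_atLeastAtMost_lipschitz[OF compact_piece[OF Q], of y' y]
      unfolding f_def dist_real_def by (cases "y \<le> y'") auto
  qed simp
  then have "continuous_on {0..c} f" by (rule lipschitz_on_continuous_on)
  moreover have "f 0 \<le> x"
    using assms(3) finite_imp_null_set_lborel[of "Q \<inter> {0}"] unfolding f_def
    by (simp add: measure_eq_0_null_sets)
  moreover have "x \<le> f c"
    using Q assms(4) unfolding f_def piece_len_def by (metis is_pieceE Int_absorb2)
  ultimately obtain y where "0 \<le> y" "y \<le> c" "f y = x"
    using IVT'[of f 0 x c] assms(2) by blast
  then show ?thesis
    using piece_Int[OF Q piece_Icc] unfolding f_def piece_len_def by blast
qed

lemma bundle_common:
  assumes "finite S" "\<forall>i\<in>S. is_bundle c G (R i)" "0 \<le> c"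
  shows "is_bundle c G (common c G R S)"
  using assms
proof (induction S rule: finite_induct)
  case empty
  then show ?case unfolding common_def is_bundle_def using piece_Icc[of c c] by auto
next
  case (insert i S)
  then have "is_piece c (fst (R i) \<inter> fst (common c G R S))"
    unfolding is_bundle_def by (auto intro: piece_Int)
  then show ?case unfolding common_def is_bundle_def by (simp add: Int_left_commute)
qed

lemma bundle_Un:
  "is_bundle c G A \<Longrightarrow> is_bundle c G B \<Longrightarrow> is_bundle c G (fst A \<union> fst B, snd A \<union> snd B)"
  unfolding is_bundle_def using piece_Un by auto

lemma bsize_Un_le:
  assumes "is_bundle c G A" "is_bundle c G B"
  shows "bsize (fst A \<union> fst B, snd A \<union> snd B) \<le> bsize A + bsize B"
  using piece_len_Un_le[of c "fst A" "fst B"] card_Un_le[of "snd A" "snd B"] assms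
  unfolding bsize_def is_bundle_def by simp

lemma util_nonneg: "util Ri A \<ge> 0"
  unfolding util_def using piece_len_nonneg by simp

lemma util_bsub: "bsub B Ri \<Longrightarrow> util Ri B = bsize B"
  unfolding util_def bsize_def bsub_def by (simp add: Int_absorb1)

lemma util_mono:
  assumes "finite G" "is_bundle c G Ri" "is_bundle c G A" "is_bundle c G B" "bsub B A"
  shows "util Ri B \<le> util Ri A"
proof -
  have "piece_len (fst Ri \<inter> fst B) \<le> piece_len (fst Ri \<inter> fst A)"
    using assms(2-5) unfolding is_bundle_def bsub_def
    by (meson piece_Int piece_len_mono Int_mono order_refl)
  moreover have "card (snd Ri \<inter> snd B) \<le> card (snd Ri \<inter> snd A)"
    using assms unfolding is_bundle_def bsub_def
    by (meson card_mono Int_mono finite_subset le_infI1 order_refl)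
  ultimately show ?thesis unfolding util_def by simp
qed

definition common_sizes :: "real \<Rightarrow> 'g set \<Rightarrow> ('a \<Rightarrow> 'g bndl) \<Rightarrow> 'a set \<Rightarrow> real set" where
  "common_sizes c G R S = {t. \<exists>B. is_bundle c G B \<and> (\<forall>i\<in>S. bsub B (R i)) \<and> bsize B = t}"

lemma bsub_common:
  assumes "is_bundle c G B" "\<forall>i\<in>S. bsub B (R i)"
  shows "bsub B (common c G R S)"
  using assms unfolding is_bundle_def is_piece_def bsub_def common_def by auto

text \<open>For the inclusion from right to left take k common goods and a subpiece of the
  common cake of length t - k.\<close>
lemma common_sizes_eq:
  assumes "0 \<le> c" "finite G" "finite S" "\<forall>i\<in>S. is_bundle c G (R i)"
  shows "common_sizes c G R S = (\<Union>k\<in>{0..card (snd (common c G R S))}.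
            {real k..real k + piece_len (fst (common c G R S))})"
    (is "_ = (\<Union>k\<in>{0..?K}. {real k..real k + ?L})")
proof -
  let ?C = "common c G R S"
  have C: "is_bundle c G ?C" using bundle_common assms by blast
  show ?thesis
  proof (intro equalityI subsetI)
    fix t
    assume "t \<in> common_sizes c G R S"
    then obtain B where B: "is_bundle c G B" "\<forall>i\<in>S. bsub B (R i)" "bsize B = t"
      unfolding common_sizes_def by auto
    have "finite (snd ?C)" using assms(2) unfolding common_def by auto
    then have "piece_len (fst B) \<le> ?L" "card (snd B) \<le> ?K"
      using bsub_common[OF B(1,2)] B(1) C unfolding is_bundle_def bsub_def
      by (auto intro: piece_len_mono card_mono)
    then show "t \<in> (\<Union>k\<in>{0..?K}. {real k..real k + ?L})"
      using B(3) piece_len_nonneg[of "fst B"] unfolding bsize_def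
      by (intro UN_I[of "card (snd B)"]) auto
  next
    fix t
    assume "t \<in> (\<Union>k\<in>{0..?K}. {real k..real k + ?L})"
    then obtain k where k: "k \<le> ?K" "real k \<le> t" "t \<le> real k + ?L" by auto
    obtain T where T: "T \<subseteq> snd ?C" "card T = k" using obtain_subset_with_card_n[OF k(1)] by blast
    obtain P where P: "is_piece c P" "P \<subseteq> fst ?C" "piece_len P = t - k"
      using exists_subpiece_of_length[of c "fst ?C" "t - k"] C assms(1) k
      unfolding is_bundle_def by auto
    have "is_bundle c G (P, T)" "\<forall>i\<in>S. bsub (P, T) (R i)" "bsize (P, T) = t"
      using P T unfolding is_bundle_def bsub_def common_def bsize_def by auto
    then show "t \<in> common_sizes c G R S" unfolding common_sizes_def by blast
  qed
qed

lemma compact_common_sizes: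
  "0 \<le> c \<Longrightarrow> finite G \<Longrightarrow> finite S \<Longrightarrow> \<forall>i\<in>S. is_bundle c G (R i) \<Longrightarrow>
    compact (common_sizes c G R S)"
  by (subst common_sizes_eq) (auto intro!: compact_UN)

lemma cohesive_nonempty:
  assumes "0 < \<alpha>" "finite N" "N \<noteq> {}" "0 < t" "cohesive c G \<alpha> N R t S"
  shows "S \<noteq> {}"
proof -
  have "0 < t * real (card N) / \<alpha>" using assms(1-4) by (simp add: card_gt_0_iff)
  then show ?thesis using assms(5) unfolding cohesive_def by auto
qed

lemma greedy_feasible_sizes:
  assumes "0 < \<alpha>" "finite N" "N \<noteq> {}" "N' \<subseteq> N"
  shows "{t. \<exists>S B. greedy_feasible c G \<alpha> N R N' t S B} =
    (\<Union>S\<in>{S. S \<noteq> {} \<and> S \<subseteq> N'}.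
       common_sizes c G R S \<inter> {..real (card S) * \<alpha> / real (card N)} \<inter> {..bsize (common c G R S)})"
proof -
  have "0 < real (card N)" using assms(2,3) by (simp add: card_gt_0_iff)
  then have cohesive_iff: "cohesive c G \<alpha> N R t S \<longleftrightarrow>
      S \<subseteq> N \<and> t \<le> real (card S) * \<alpha> / real (card N) \<and> t \<le> bsize (common c G R S)" for t S
    using assms(1) unfolding cohesive_def by (auto simp: field_simps)
  show ?thesis
  proof (intro equalityI subsetI)
    fix t
    assume "t \<in> {t. \<exists>S B. greedy_feasible c G \<alpha> N R N' t S B}"
    then obtain S B where "greedy_feasible c G \<alpha> N R N' t S B" by blast
    then have "S \<in> {S. S \<noteq> {} \<and> S \<subseteq> N'}" "t \<in> common_sizes c G R S"
      "t \<le> real (card S) * \<alpha> / real (card N)" "t \<le> bsize (common c G R S)"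
      unfolding greedy_feasible_def cohesive_iff common_sizes_def by blast+
    then show "t \<in> (\<Union>S\<in>{S. S \<noteq> {} \<and> S \<subseteq> N'}. common_sizes c G R S \<inter>
        {..real (card S) * \<alpha> / real (card N)} \<inter> {..bsize (common c G R S)})" by blast
  next
    fix t
    assume "t \<in> (\<Union>S\<in>{S. S \<noteq> {} \<and> S \<subseteq> N'}. common_sizes c G R S \<inter>
        {..real (card S) * \<alpha> / real (card N)} \<inter> {..bsize (common c G R S)})"
    then obtain S B where "S \<noteq> {}" "S \<subseteq> N'" "is_bundle c G B" "\<forall>i\<in>S. bsub B (R i)" "bsize B = t"
      "t \<le> real (card S) * \<alpha> / real (card N)" "t \<le> bsize (common c G R S)"
      unfolding common_sizes_def by blast
    then have "greedy_feasible c G \<alpha> N R N' t S B"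
      using assms(4) unfolding greedy_feasible_def cohesive_iff by blast
    then show "t \<in> {t. \<exists>S B. greedy_feasible c G \<alpha> N R N' t S B}" by blast
  qed
qed

lemma greedy_tstar_exists:
  assumes "0 \<le> c" "finite G" "0 < \<alpha>" "finite N" "N \<noteq> {}" "\<forall>i\<in>N. is_bundle c G (R i)"
    and "N' \<subseteq> N" "N' \<noteq> {}"
  shows "\<exists>t. greedy_tstar c G \<alpha> N R N' t"
proof -
  let ?F = "{t. \<exists>S B. greedy_feasible c G \<alpha> N R N' t S B}"
  have "finite (Pow N')" using assms(4,7) by (auto intro: finite_subset)
  then have "finite {S. S \<noteq> {} \<and> S \<subseteq> N'}" by (rule finite_subset[rotated]) auto
  moreover have "finite S \<and> (\<forall>i\<in>S. is_bundle c G (R i))" if "S \<subseteq> N'" for S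
    using that assms(4,6,7) by (auto intro: finite_subset)
  ultimately have "compact ?F"
    unfolding greedy_feasible_sizes[OF assms(3-5,7)] using assms(1,2)
    by (intro compact_UN compact_Int_closed compact_common_sizes) auto
  moreover obtain i where i: "i \<in> N'" using assms(8) by blast
  have "greedy_feasible c G \<alpha> N R N' 0 {i} ({}, {})"
    using i assms(7) piece_empty
    unfolding greedy_feasible_def cohesive_def is_bundle_def bsub_def bsize_def
    by (auto simp: piece_len_def bsize_def piece_len_nonneg)
  then have "0 \<in> ?F" by blast
  ultimately obtain t where "t \<in> ?F" "\<forall>t'\<in>?F. t' \<le> t"
    using compact_attains_sup by blast
  then have "greedy_tstar c G \<alpha> N R N' t"
    using \<open>0 \<in> ?F\<close> unfolding greedy_tstar_def by auto
  then show ?thesis ..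
qed

definition EJR_M_outside ::
  "real \<Rightarrow> 'g set \<Rightarrow> real \<Rightarrow> 'a set \<Rightarrow> ('a \<Rightarrow> 'g bndl) \<Rightarrow> 'a set \<Rightarrow> 'g bndl \<Rightarrow> bool" where
  "EJR_M_outside c G \<alpha> N R N' A \<longleftrightarrow>
     (\<forall>t S. t > 0 \<and> cohesive c G \<alpha> N R t S \<and>
        (\<exists>B. is_bundle c G B \<and> bsize B = t \<and> (\<forall>i\<in>S. bsub B (R i))) \<and> \<not> S \<subseteq> N'
        \<longrightarrow> (\<exists>j\<in>S. util (R j) A \<ge> t))"

lemma EJR_M_outside_empty:
  "0 < \<alpha> \<Longrightarrow> finite N \<Longrightarrow> N \<noteq> {} \<Longrightarrow> EJR_M_outside c G \<alpha> N R {} A \<Longrightarrow> EJR_M c G \<alpha> N R A"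
  unfolding EJR_M_outside_def EJR_M_def using cohesive_nonempty by (metis subset_empty)

text \<open>A group inside N' that meets the removed group S' was itself a candidate in this
  step, so its t is at most the maximum ts = bsize B, which every member of S' gets from B.\<close>
lemma EJR_M_outside_step:
  assumes G: "finite G" and "0 < \<alpha>" "finite N" "N \<noteq> {}" and R: "\<forall>i\<in>N. is_bundle c G (R i)"
    and A: "is_bundle c G A" and out: "EJR_M_outside c G \<alpha> N R N' A"
    and tstar: "greedy_tstar c G \<alpha> N R N' ts" and feas: "greedy_feasible c G \<alpha> N R N' ts S' B"
  shows "EJR_M_outside c G \<alpha> N R (N' - S') (fst A \<union> fst B, snd A \<union> snd B)"
  unfolding EJR_M_outside_def
proof (intro allI impI)
  let ?A' = "(fst A \<union> fst B, snd A \<union> snd B)"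
  fix t S
  assume h: "0 < t \<and> cohesive c G \<alpha> N R t S \<and>
    (\<exists>B. is_bundle c G B \<and> bsize B = t \<and> (\<forall>i\<in>S. bsub B (R i))) \<and> \<not> S \<subseteq> N' - S'"
  then have t: "0 < t" and coh: "cohesive c G \<alpha> N R t S" and out_S: "\<not> S \<subseteq> N' - S'" by blast+
  obtain B0 where B0: "is_bundle c G B0" "bsize B0 = t" "\<forall>i\<in>S. bsub B0 (R i)" using h by blast
  have B: "is_bundle c G B" "\<forall>i\<in>S'. bsub B (R i)" "bsize B = ts"
    using feas unfolding greedy_feasible_def by auto
  have A': "is_bundle c G ?A'" using bundle_Un[OF A B(1)] .
  have "S \<subseteq> N" using coh unfolding cohesive_def by blast
  have grows: "util (R j) A \<le> util (R j) ?A'" "util (R j) B \<le> util (R j) ?A'" if "j \<in> S" for j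
  proof -
    have "is_bundle c G (R j)" using R \<open>S \<subseteq> N\<close> that by blast
    moreover have "bsub A ?A'" "bsub B ?A'" by (simp_all add: bsub_def)
    ultimately show "util (R j) A \<le> util (R j) ?A'" "util (R j) B \<le> util (R j) ?A'"
      using util_mono[OF G _ A' A] util_mono[OF G _ A' B(1)] by blast+
  qed
  show "\<exists>j\<in>S. t \<le> util (R j) ?A'"
  proof (cases "S \<subseteq> N'")
    case False
    moreover have "\<exists>B. is_bundle c G B \<and> bsize B = t \<and> (\<forall>i\<in>S. bsub B (R i))"
      using B0 by blast
    ultimately obtain j where "j \<in> S" "t \<le> util (R j) A"
      using out[unfolded EJR_M_outside_def, rule_format, of t S] t coh by blast
    then show ?thesis using grows(1) by force
  next
    case True
    then obtain j where j: "j \<in> S" "j \<in> S'" using out_S by blast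
    have "greedy_feasible c G \<alpha> N R N' t S B0"
      using B0 coh True cohesive_nonempty[OF assms(2-4) t coh] unfolding greedy_feasible_def by simp
    moreover have "0 \<le> t" using t by simp
    ultimately have "t \<le> ts" using tstar unfolding greedy_tstar_def by blast
    also have "ts = util (R j) B" using util_bsub[of B "R j"] B(2,3) j(2) by simp
    also have "\<dots> \<le> util (R j) ?A'" using grows(2) j(1) .
    finally show ?thesis using j(1) by blast
  qed
qed

lemma greedy_budget_step:
  assumes "0 < \<alpha>" and A: "is_bundle c G A"
    and budget: "bsize A * real (card N) \<le> \<alpha> * (real (card N) - real (card N'))"
    and "finite N'" and feas: "greedy_feasible c G \<alpha> N R N' ts S' B"
  shows "bsize (fst A \<union> fst B, snd A \<union> snd B) * real (card N)
           \<le> \<alpha> * (real (card N) - real (card (N' - S')))"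
proof -
  have B: "S' \<subseteq> N'" "cohesive c G \<alpha> N R ts S'" "is_bundle c G B" "bsize B = ts"
    using feas unfolding greedy_feasible_def by auto
  have "bsize (fst A \<union> fst B, snd A \<union> snd B) * real (card N) \<le> (bsize A + ts) * real (card N)"
    using bsize_Un_le[OF A B(3)] B(4) by (simp add: mult_right_mono)
  also have "\<dots> = bsize A * real (card N) + ts * real (card N)" by (simp add: algebra_simps)
  also have "\<dots> \<le> \<alpha> * (real (card N) - real (card N')) + \<alpha> * real (card S')"
    using budget B(2) \<open>0 < \<alpha>\<close> unfolding cohesive_def by (simp add: field_simps)
  also have "\<dots> = \<alpha> * (real (card N) - real (card (N' - S')))"
    using B(1) \<open>finite N'\<close>
    by (simp add: card_Diff_subset card_mono finite_subset of_nat_diff algebra_simps)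
  finally show ?thesis .
qed

definition greedy_inv ::
  "real \<Rightarrow> 'g set \<Rightarrow> real \<Rightarrow> 'a set \<Rightarrow> ('a \<Rightarrow> 'g bndl) \<Rightarrow> 'a set \<times> 'g bndl \<Rightarrow> bool" where
  "greedy_inv c G \<alpha> N R st \<longleftrightarrow> fst st \<subseteq> N \<and> is_bundle c G (snd st) \<and>
     bsize (snd st) * real (card N) \<le> \<alpha> * (real (card N) - real (card (fst st))) \<and>
     EJR_M_outside c G \<alpha> N R (fst st) (snd st)"

lemma greedy_inv_init: "greedy_inv c G \<alpha> N R (N, ({}, {}))"
  unfolding greedy_inv_def EJR_M_outside_def cohesive_def is_bundle_def bsize_def piece_len_def
  using piece_empty by auto

lemma greedy_stepE:
  assumes "greedy_step c G \<alpha> N R (N', A) st'"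
  obtains ts S B where "greedy_tstar c G \<alpha> N R N' ts" "greedy_feasible c G \<alpha> N R N' ts S B"
    "st' = (N' - S, (fst A \<union> fst B, snd A \<union> snd B))"
proof -
  have "\<exists>ts S B. greedy_tstar c G \<alpha> N R N' ts \<and> greedy_feasible c G \<alpha> N R N' ts S B \<and>
      st' = (N' - S, (fst A \<union> fst B, snd A \<union> snd B))"
    using assms unfolding greedy_step_def by simp
  then show thesis using that by blast
qed

lemma greedy_inv_step:
  assumes "finite G" "0 < \<alpha>" "finite N" "N \<noteq> {}" "\<forall>i\<in>N. is_bundle c G (R i)"
    and inv: "greedy_inv c G \<alpha> N R st" and step: "greedy_step c G \<alpha> N R st st'"
  shows "greedy_inv c G \<alpha> N R st'"
proof -
  obtain N' A where st: "st = (N', A)" using prod.exhaust by blast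
  obtain ts S B where ts: "greedy_tstar c G \<alpha> N R N' ts"
    and feas: "greedy_feasible c G \<alpha> N R N' ts S B"
    and st': "st' = (N' - S, (fst A \<union> fst B, snd A \<union> snd B))"
    using step unfolding st by (rule greedy_stepE)
  have N': "N' \<subseteq> N" and A: "is_bundle c G A"
    and budget: "bsize A * real (card N) \<le> \<alpha> * (real (card N) - real (card N'))"
    and out: "EJR_M_outside c G \<alpha> N R N' A"
    using inv unfolding st greedy_inv_def by auto
  have "finite N'" using N' assms(3) by (rule finite_subset)
  have B: "is_bundle c G B" using feas unfolding greedy_feasible_def by auto
  have "N' - S \<subseteq> N" using N' by blast
  then show ?thesis
    using bundle_Un[OF A B] greedy_budget_step[OF assms(2) A budget \<open>finite N'\<close> feas]
      EJR_M_outside_step[OF assms(1-5) A out ts feas]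
    unfolding st' greedy_inv_def fst_conv snd_conv by blast
qed

lemma greedy_inv_reachable:
  assumes "finite G" "0 < \<alpha>" "finite N" "N \<noteq> {}" "\<forall>i\<in>N. is_bundle c G (R i)"
    and "(greedy_step c G \<alpha> N R)\<^sup>*\<^sup>* (N, ({}, {})) st"
  shows "greedy_inv c G \<alpha> N R st"
  using assms(6)
  by (induction rule: rtranclp_induct) (use greedy_inv_init greedy_inv_step[OF assms(1-5)] in blast)+

lemma greedy_step_card_less:
  assumes "greedy_step c G \<alpha> N R st st'" "finite (fst st)"
  shows "fst st' \<subseteq> fst st" "card (fst st') < card (fst st)"
proof -
  have "\<exists>S. S \<noteq> {} \<and> S \<subseteq> fst st \<and> fst st' = fst st - S"
    using assms(1) unfolding greedy_step_def greedy_feasible_def by auto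
  then obtain S where "S \<noteq> {}" "S \<subseteq> fst st" "fst st' = fst st - S" by blast
  then show "fst st' \<subseteq> fst st" "card (fst st') < card (fst st)"
    using assms(2) by (auto intro!: psubset_card_mono)
qed

lemma greedy_no_infinite_run:
  assumes "finite N"
  shows "\<not> (\<exists>f. f 0 = (N, ({}, {})) \<and> (\<forall>k. greedy_step c G \<alpha> N R (f k) (f (Suc k))))"
proof
  assume "\<exists>f. f 0 = (N, ({}, {})) \<and> (\<forall>k. greedy_step c G \<alpha> N R (f k) (f (Suc k)))"
  then obtain f where f0: "f 0 = (N, ({}, {}))"
    and steps: "\<forall>k. greedy_step c G \<alpha> N R (f k) (f (Suc k))"
    by blast
  have "fst (f k) \<subseteq> N \<and> card (fst (f k)) + k \<le> card N" for k
  proof (induction k)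
    case 0
    then show ?case using f0 by simp
  next
    case (Suc k)
    then have "finite (fst (f k))" using assms finite_subset by blast
    then show ?case using greedy_step_card_less[OF steps[rule_format, of k]] Suc by auto
  qed
  from this[of "Suc (card N)"] show False by simp
qed

lemma greedy_run_terminates:
  assumes "0 \<le> c" "finite G" "0 < \<alpha>" "finite N" "N \<noteq> {}" "\<forall>i\<in>N. is_bundle c G (R i)"
  shows "(greedy_step c G \<alpha> N R)\<^sup>*\<^sup>* (N, ({}, {})) st \<Longrightarrow>
    \<exists>A. (greedy_step c G \<alpha> N R)\<^sup>*\<^sup>* st ({}, A)"
proof (induction "card (fst st)" arbitrary: st rule: less_induct)
  case less
  show ?case
  proof (cases "fst st = {}")
    case True
    then show ?thesis by (metis prod.collapse rtranclp.rtrancl_refl)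
  next
    case False
    have "fst st \<subseteq> N"
      using greedy_inv_reachable[OF assms(2-6) less.prems] unfolding greedy_inv_def by blast
    then obtain t where t: "greedy_tstar c G \<alpha> N R (fst st) t"
      using greedy_tstar_exists[OF assms] False by blast
    then obtain S B where "greedy_feasible c G \<alpha> N R (fst st) t S B"
      unfolding greedy_tstar_def by blast
    then obtain st' where step: "greedy_step c G \<alpha> N R st st'"
      using False t unfolding greedy_step_def by blast
    moreover have "finite (fst st)" using \<open>fst st \<subseteq> N\<close> assms(4) by (rule finite_subset)
    ultimately obtain A where "(greedy_step c G \<alpha> N R)\<^sup>*\<^sup>* st' ({}, A)"
      using less.hyps[of st'] less.prems greedy_step_card_less
      by (meson rtranclp.rtrancl_into_rtrancl)
    then show ?thesis using step by (meson converse_rtranclp_into_rtranclp)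
  qed
qed

lemma greedy_final_bundle:
  assumes "finite G" "0 < \<alpha>" "finite N" "N \<noteq> {}" "\<forall>i\<in>N. is_bundle c G (R i)"
    and "(greedy_step c G \<alpha> N R)\<^sup>*\<^sup>* (N, ({}, {})) ({}, A)"
  shows "is_bundle c G A" "bsize A \<le> \<alpha>" "EJR_M c G \<alpha> N R A"
proof -
  have inv: "greedy_inv c G \<alpha> N R ({}, A)" using greedy_inv_reachable[OF assms] .
  then show "is_bundle c G A" unfolding greedy_inv_def by simp
  show "EJR_M c G \<alpha> N R A"
    using inv unfolding greedy_inv_def by (auto intro: EJR_M_outside_empty[OF assms(2-4)])
  have "bsize A * real (card N) \<le> \<alpha> * real (card N)" using inv unfolding greedy_inv_def by simp
  then show "bsize A \<le> \<alpha>" using assms(3,4) by (simp add: card_gt_0_iff)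
qed

text \<open>Use \<lfloor>t\<rfloor> common goods if there are that many; otherwise t itself is a size.\<close>
lemma common_size_above:
  assumes "0 \<le> c" "finite G" "finite S" "\<forall>i\<in>S. is_bundle c G (R i)"
    and "1 \<le> t" "t \<le> bsize (common c G R S)"
  shows "\<exists>t'\<in>common_sizes c G R S. t - 1 < t' \<and> t' \<le> t \<and> 0 < t'"
proof (cases "t \<le> real (card (snd (common c G R S)))")
  case True
  then have "nat \<lfloor>t\<rfloor> \<le> card (snd (common c G R S))" by linarith
  then have "real (nat \<lfloor>t\<rfloor>) \<in> common_sizes c G R S"
    using piece_len_nonneg unfolding common_sizes_eq[OF assms(1-4)] by fastforce
  then show ?thesis using assms(5) by (intro bexI[of _ "real (nat \<lfloor>t\<rfloor>)"]) linarith+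
next
  case False
  then have "t \<in> common_sizes c G R S"
    using assms(6) unfolding common_sizes_eq[OF assms(1-4)] bsize_def by fastforce
  then show ?thesis using assms(5) by force
qed

lemma EJR_M_imp_EJR_1:
  assumes "0 \<le> c" "finite G" "0 < \<alpha>" "finite N" "N \<noteq> {}" "\<forall>i\<in>N. is_bundle c G (R i)"
    and "EJR_M c G \<alpha> N R A"
  shows "EJR_1 c G \<alpha> N R A"
  unfolding EJR_1_def
proof (intro allI impI)
  fix t S
  assume h: "0 < t \<and> cohesive c G \<alpha> N R t S"
  then have "S \<noteq> {}" "S \<subseteq> N"
    using cohesive_nonempty[OF assms(3-5)] unfolding cohesive_def by blast+
  show "\<exists>j\<in>S. t - 1 < util (R j) A"
  proof (cases "t < 1")
    case True
    then show ?thesis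
      using \<open>S \<noteq> {}\<close> util_nonneg by (meson all_not_in_conv diff_less_0_iff_less less_le_trans)
  next
    case False
    have "finite S" using \<open>S \<subseteq> N\<close> assms(4) by (rule finite_subset)
    then obtain t' where t': "t' \<in> common_sizes c G R S" "t - 1 < t'" "t' \<le> t" "0 < t'"
      using common_size_above[OF assms(1,2), of S R t] h False \<open>S \<subseteq> N\<close> assms(6)
      unfolding cohesive_def by auto
    then obtain B where B: "is_bundle c G B" "\<forall>i\<in>S. bsub B (R i)" "bsize B = t'"
      unfolding common_sizes_def by blast
    have "cohesive c G \<alpha> N R t' S"
      using h t'(3) assms(3) unfolding cohesive_def
      by (auto intro: order_trans[OF divide_right_mono[OF mult_right_mono]])
    then obtain j where "j \<in> S" "t' \<le> util (R j) A"
      using assms(7) t'(4) B unfolding EJR_M_def by blast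
    then show ?thesis using t'(2) by force
  qed
qed

theorem mainTheorem5:
  fixes c \<alpha> :: real and G :: "'g set" and N :: "'a set" and R :: "'a \<Rightarrow> 'g bndl"
  assumes "c \<ge> 0" and "finite G" and "max c (real (card G)) > 0"
    and "0 < \<alpha>" and "\<alpha> \<le> c + real (card G)"
    and "finite N" and "N \<noteq> {}"
    and "\<forall>i\<in>N. is_bundle c G (R i)"
  shows "(\<forall>N' A. (greedy_step c G \<alpha> N R)\<^sup>*\<^sup>* (N, ({}, {})) (N', A) \<and> N' \<noteq> {}
              \<longrightarrow> (\<exists>t. greedy_tstar c G \<alpha> N R N' t))
    \<and> \<not> (\<exists>f. f 0 = (N, ({}, {})) \<and> (\<forall>k. greedy_step c G \<alpha> N R (f k) (f (Suc k))))
    \<and> (\<exists>A. (greedy_step c G \<alpha> N R)\<^sup>*\<^sup>* (N, ({}, {})) ({}, A))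
    \<and> (\<forall>A. (greedy_step c G \<alpha> N R)\<^sup>*\<^sup>* (N, ({}, {})) ({}, A) \<longrightarrow>
           is_bundle c G A \<and> bsize A \<le> \<alpha> \<and> EJR_M c G \<alpha> N R A \<and> EJR_1 c G \<alpha> N R A)
    \<and> (\<exists>A. is_bundle c G A \<and> bsize A \<le> \<alpha> \<and> EJR_M c G \<alpha> N R A)"
proof -
  note hyps = assms(1,2,4,6,7,8)
  have well_defined: "\<exists>t. greedy_tstar c G \<alpha> N R N' t"
    if "(greedy_step c G \<alpha> N R)\<^sup>*\<^sup>* (N, ({}, {})) (N', A)" "N' \<noteq> {}" for N' A
    using greedy_inv_reachable[OF hyps(2-6) that(1)] greedy_tstar_exists[OF hyps _ that(2)]
    unfolding greedy_inv_def by simp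
  have terminates: "\<exists>A. (greedy_step c G \<alpha> N R)\<^sup>*\<^sup>* (N, ({}, {})) ({}, A)"
    using greedy_run_terminates[OF hyps] by blast
  have sound: "is_bundle c G A \<and> bsize A \<le> \<alpha> \<and> EJR_M c G \<alpha> N R A \<and> EJR_1 c G \<alpha> N R A"
    if "(greedy_step c G \<alpha> N R)\<^sup>*\<^sup>* (N, ({}, {})) ({}, A)" for A
    using greedy_final_bundle[OF hyps(2-6) that] EJR_M_imp_EJR_1[OF hyps] by blast
  show ?thesis
    using well_defined greedy_no_infinite_run[OF assms(6)] terminates sound by blast
qed

end
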